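(* Consider any sequences generated by Algorithm 3 with parameters satisfying $\theta\le\left[\sigma\left(\frac4\mu+\nu\right)\right]^{-1}$, $\lambda\le\left[\frac{4\sigma\lambda_{\max}(\mathbf{W})}{\mu}\right]^{-1}$, $\beta\le\min\{\frac1\mu,\frac\nu3\}$, $\gamma\le\lambda_{\min}^+(\mathbf{W})\beta$. Let $\|(y,z)\|^2_{\mathbf{M}} := \frac1\theta\|y\|^2 + \frac1\lambda\|z\|^2_{\mathbf{W}^\dagger}$ for $y\in\mathbb{R}^{nd}$, $z\in\mathrm{range}(\mathbf{W})$. Then for every $k\ge0$, \[ \|(y^{k+1}-y^*,z^{k+1}-z^* )\|^2_{\mathbf{M}} \le \|(y^k-y^*,z^k-z^* )\|^2_{\mathbf{M}} - (\beta-2\nu)\|y^{k+1}-y^*\|^2 - \gamma\|z^{k+1}-z^*\|^2_{\mathbf{W}^\dagger} + \frac{2(1-\sigma)}\sigma\mathrm{D}_h\big((y_f^k,z_f^k),(y^*,z^* )\big) - \frac2\sigma\mathrm{D}_h\big((y_f^{k+1},z_f^{k+1}),(y^*,z^* )\big) - 2\langle x^{k+1}-x^*,y^{k+1}-y^*\rangle. \]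
   Context: $F:\mathbb{R}^{nd}\to\mathbb{R}$ is differentiable, $\mu$-strongly convex and $L$-smooth, $0<\mu\le L$. $\mathbf{W}$ is a symmetric positive semidefinite $nd\times nd$ matrix whose kernel is the consensus space $\{(x_1,\dots,x_n)\in(\mathbb{R}^d)^n:x_1=\dots=x_n\}$, with largest eigenvalue $\lambda_{\max}(\mathbf{W})$ and smallest positive eigenvalue $\lambda_{\min}^+(\mathbf{W})$; $\mathbf{W}^\dagger$ is the inverse of $\mathbf{W}$ restricted to $\mathrm{range}(\mathbf{W})$ and $\|z\|^2_{\mathbf{W}^\dagger}:=\langle\mathbf{W}^\dagger z,z\rangle$. $x^*$ is the unique minimizer of $F$ over $\ker(\mathbf{W})$; $y^*:=\nabla F(x^* )-\frac\mu2x^*$, $z^*:=-\nabla F(x^* )\in\mathrm{range}(\mathbf{W})$. $r(x):=F(x)-\frac\mu4\|x\|^2$, $h(y,z):=\frac1\mu\|y+z\|^2+\frac\nu2\|y\|^2$ (so $\nabla_yh(y,z)=\frac2\mu(y+z)+\nu y$, $\nabla_zh(y,z)=\frac2\mu(y+z)$). $\mathrm{D}_h(u,v):=h(u)-h(v)-\langle\nabla h(v),u-v\rangle$. Algorithm 3: given $x^0,y^0\in\mathbb{R}^{nd}$, $z^0\in\mathrm{range}(\mathbf{W})$, parameters $\eta,\theta,\lambda,\alpha,\beta,\gamma,\nu>0$, $\tau,\sigma\in(0,1)$, set $x_f^0=x^0$, $y_f^0=y^0$, $z_f^0=z^0$, and for $k\ge0$: $x_g^k=\tau x^k+(1-\tau)x_f^k$,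 $y_g^k=\sigma y^k+(1-\sigma)y_f^k$, $z_g^k=\sigma z^k+(1-\sigma)z_f^k$; $(x^{k+1},y^{k+1})$ satisfies $x^{k+1} = x^k + \eta\alpha(x_g^k-x^{k+1}) - \eta\nabla r(x_g^k) + \eta y^{k+1}$ and $y^{k+1} = y^k + \theta\beta(y_g^k - y^{k+1}) - \theta\nabla_y h(y_g^k,z_g^k) + \theta\nu y^{k+1} - \theta x^{k+1}$; $z^{k+1} = z^k + \lambda\gamma(z_g^k - z^{k+1}) - \lambda\mathbf{W}\nabla_z h(y_g^k,z_g^k)$; $x_f^{k+1}=x_g^k+\frac{2\tau}{2-\tau}(x^{k+1}-x^k)$, $y_f^{k+1}=y_g^k+\sigma(y^{k+1}-y^k)$, $z_f^{k+1}=z_g^k+\sigma(z^{k+1}-z^k)$. *)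

theory Defs
  imports "HOL-Analysis.Analysis"
begin

text \<open>Vectors of R^{nd} are represented as elements of (R^d)^n, i.e. type real^'d^'n.
  The Euclidean inner product on this type is the standard one on R^{nd}.\<close>

definition mu_strongly_convex :: "real \<Rightarrow> ('a::real_inner \<Rightarrow> real) \<Rightarrow> bool" where
  "mu_strongly_convex \<mu> F \<longleftrightarrow> convex_on UNIV (\<lambda>x. F x - \<mu> / 2 * (norm x)\<^sup>2)"

definition L_smooth :: "real \<Rightarrow> ('a::real_inner \<Rightarrow> 'a) \<Rightarrow> bool" where
  "L_smooth L gF \<longleftrightarrow> (\<forall>x y. norm (gF x - gF y) \<le> L * norm (x - y))"

definition consensus_space :: "(real^'d^'n) set" where
  "consensus_space = {x. \<forall>i j. x $ i = x $ j}"

definition eigenvalues_of :: "('a::real_vector \<Rightarrow> 'a) \<Rightarrow> real set" where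
  "eigenvalues_of W = {l. \<exists>v. v \<noteq> 0 \<and> W v = l *\<^sub>R v}"

definition lambda_max :: "('a::real_vector \<Rightarrow> 'a) \<Rightarrow> real" where
  "lambda_max W = Max (eigenvalues_of W)"

definition lambda_min_pos :: "('a::real_vector \<Rightarrow> 'a) \<Rightarrow> real" where
  "lambda_min_pos W = Min {l \<in> eigenvalues_of W. l > 0}"

definition pinv :: "('a::real_vector \<Rightarrow> 'a) \<Rightarrow> 'a \<Rightarrow> 'a" where
  "pinv W z = (THE v. v \<in> range W \<and> W v = z)"

definition normWdag_sq :: "('a::real_inner \<Rightarrow> 'a) \<Rightarrow> 'a \<Rightarrow> real" where
  "normWdag_sq W z = inner (pinv W z) z"

definition normM_sq :: "('a::real_inner \<Rightarrow> 'a) \<Rightarrow> real \<Rightarrow> real \<Rightarrow> 'a \<Rightarrow> 'a \<Rightarrow> real" where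
  "normM_sq W \<theta> lam y z = 1 / \<theta> * (norm y)\<^sup>2 + 1 / lam * normWdag_sq W z"

definition hfun :: "real \<Rightarrow> real \<Rightarrow> 'a::real_inner \<Rightarrow> 'a \<Rightarrow> real" where
  "hfun \<mu> \<nu> y z = 1 / \<mu> * (norm (y + z))\<^sup>2 + \<nu> / 2 * (norm y)\<^sup>2"

definition grad_y_h :: "real \<Rightarrow> real \<Rightarrow> 'a::real_inner \<Rightarrow> 'a \<Rightarrow> 'a" where
  "grad_y_h \<mu> \<nu> y z = (2 / \<mu>) *\<^sub>R (y + z) + \<nu> *\<^sub>R y"

definition grad_z_h :: "real \<Rightarrow> real \<Rightarrow> 'a::real_inner \<Rightarrow> 'a \<Rightarrow> 'a" where
  "grad_z_h \<mu> \<nu> y z = (2 / \<mu>) *\<^sub>R (y + z)"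

definition Dh :: "real \<Rightarrow> real \<Rightarrow> 'a::real_inner \<Rightarrow> 'a \<Rightarrow> 'a \<Rightarrow> 'a \<Rightarrow> real" where
  "Dh \<mu> \<nu> u1 u2 v1 v2 = hfun \<mu> \<nu> u1 u2 - hfun \<mu> \<nu> v1 v2
     - inner (grad_y_h \<mu> \<nu> v1 v2) (u1 - v1) - inner (grad_z_h \<mu> \<nu> v1 v2) (u2 - v2)"

end

theory Submission
  imports Defs
begin

text \<open>The y-update is a proximal step in the Euclidean metric and the z-update one in the metric
  (p, q) \<mapsto> \<langle>W^\<dagger> p, q\<rangle> on range W. The z-iterates never leave range W, and neither does
  z* = -\<nabla>F(x*): optimality of x* on the consensus space ker W makes \<nabla>F(x*) orthogonal to ker W.
  The three-point identity turns both steps into a telescoping estimate for the M-norm, with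
  remainder \<langle>\<nabla>h(y_g, z_g) - \<nabla>h(y*, z*), (y^(k+1) - y*, z^(k+1) - z*)\<rangle>. Since h is quadratic,
  its Bregman divergence is h of the difference, and the remainder is an exact combination of
  h-values at y_f^(k+1), y_f^k, y_g^k and at the increment. The bounds on \<theta> and \<lambda> (through
  \<lambda>_max W) let the M-norm of the increment absorb its h-value, and the bounds on \<beta> and \<gamma>
  (through \<lambda>_min^+ W) give \<beta> |y|^2 + \<gamma> |z|^2_(W^\<dagger>) \<le> 2 h(y, z).\<close>

section \<open>Symmetric positive semidefinite maps\<close>

lemma quadratic_nonneg_discriminant:
  fixes a b c :: real
  assumes nonneg: "\<And>t. 0 \<le> a - 2 * t * b + t\<^sup>2 * c" and "0 \<le> c"
  shows "b\<^sup>2 \<le> a * c"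
proof (cases "c = 0")
  case True
  show ?thesis
  proof (cases "b = 0")
    case False
    have "0 \<le> a - 2 * ((a + 1) / (2 * b)) * b + ((a + 1) / (2 * b))\<^sup>2 * c" by (rule nonneg)
    also have "\<dots> = -1" using False True by (simp add: field_simps)
    finally show ?thesis by simp
  qed (use True in simp)
next
  case False
  with \<open>0 \<le> c\<close> have "0 < c" by simp
  have "0 \<le> a - 2 * (b / c) * b + (b / c)\<^sup>2 * c" by (rule nonneg)
  also have "\<dots> = a - b\<^sup>2 / c" using \<open>0 < c\<close> by (simp add: field_simps power2_eq_square)
  finally show ?thesis using \<open>0 < c\<close> by (simp add: field_simps)
qed

lemma Cauchy_Schwarz_psd_on:
  fixes A :: "'a::real_inner \<Rightarrow> 'a"
  assumes "linear A" and sym: "\<And>u v. inner (A u) v = inner u (A v)"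
    and psd: "\<And>u. u \<in> S \<Longrightarrow> 0 \<le> inner (A u) u"
    and "subspace S" "u \<in> S" "v \<in> S"
  shows "(inner (A u) v)\<^sup>2 \<le> inner (A u) u * inner (A v) v"
proof (rule quadratic_nonneg_discriminant)
  fix t :: real
  have "u - t *\<^sub>R v \<in> S" using assms by (simp add: subspace_diff subspace_scale)
  hence "0 \<le> inner (A (u - t *\<^sub>R v)) (u - t *\<^sub>R v)" by (rule psd)
  also have "\<dots> = inner (A u) u - 2 * t * inner (A u) v + t\<^sup>2 * inner (A v) v"
    using \<open>linear A\<close> sym[of v u]
    by (simp add: linear_diff linear_scale inner_diff_left inner_diff_right inner_commute
        power2_eq_square algebra_simps)
  finally show "0 \<le> inner (A u) u - 2 * t * inner (A u) v + t\<^sup>2 * inner (A v) v" .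
qed (use assms in simp)

lemma Rayleigh_quotient_maximizer:
  fixes W :: "'a::euclidean_space \<Rightarrow> 'a"
  assumes lin: "linear W" and sym: "\<And>u v. inner (W u) v = inner u (W v)"
    and S: "subspace S" and invariant: "\<And>u. u \<in> S \<Longrightarrow> W u \<in> S"
    and "s \<in> S" "s \<noteq> 0"
  obtains e where "e \<in> S" "norm e = 1" "W e = inner (W e) e *\<^sub>R e"
    "\<And>u. u \<in> S \<Longrightarrow> inner (W u) u \<le> inner (W e) e * (norm u)\<^sup>2"
proof -
  define K where "K = S \<inter> sphere 0 1"
  have "compact K"
    unfolding K_def by (simp add: closed_subspace[OF S] closed_Int_compact)
  moreover have "s /\<^sub>R norm s \<in> K"
    unfolding K_def using \<open>s \<in> S\<close> \<open>s \<noteq> 0\<close> S by (simp add: subspace_scale)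
  moreover have "continuous_on K (\<lambda>u. inner (W u) u)"
    using lin by (intro continuous_intros linear_continuous_on linear_conv_bounded_linear[THEN iffD1])
  ultimately obtain e where "e \<in> K" and e_max: "\<And>u. u \<in> K \<Longrightarrow> inner (W u) u \<le> inner (W e) e"
    using continuous_attains_sup[of K] by blast
  define M where "M = inner (W e) e"
  have "e \<in> S" "norm e = 1" using \<open>e \<in> K\<close> by (auto simp: K_def)
  have bound: "inner (W u) u \<le> M * (norm u)\<^sup>2" if "u \<in> S" for u
  proof (cases "u = 0")
    case True thus ?thesis using lin by (simp add: linear_0)
  next
    case False
    have "u /\<^sub>R norm u \<in> K" unfolding K_def using \<open>u \<in> S\<close> False S by (simp add: subspace_scale)
    hence "inner (W (u /\<^sub>R norm u)) (u /\<^sub>R norm u) \<le> M" unfolding M_def by (rule e_max)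
    thus ?thesis using False lin by (simp add: linear_scale field_simps power2_eq_square)
  qed
  \<comment> \<open>\<open>M - W\<close> is positive semidefinite on \<open>S\<close> and its form vanishes at \<open>e\<close>, so Cauchy--Schwarz kills \<open>(M - W) e\<close>.\<close>
  define A where "A u = M *\<^sub>R u - W u" for u
  have "linear A"
    unfolding A_def by (rule linearI) (simp_all add: linear_add[OF lin] linear_scale[OF lin] algebra_simps)
  have r_in: "A e \<in> S" unfolding A_def using \<open>e \<in> S\<close> invariant S by (simp add: subspace_diff subspace_scale)
  have "(inner (A e) (A e))\<^sup>2 \<le> inner (A e) e * inner (A (A e)) (A e)"
  proof (rule Cauchy_Schwarz_psd_on[OF \<open>linear A\<close> _ _ S \<open>e \<in> S\<close> r_in])
    show "inner (A u) v = inner u (A v)" for u v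
      unfolding A_def using sym[of u v] by (simp add: inner_diff_left inner_diff_right inner_commute)
    show "0 \<le> inner (A u) u" if "u \<in> S" for u
      using bound[OF that] unfolding A_def by (simp add: inner_diff_left power2_norm_eq_inner)
  qed
  moreover have "inner (A e) e = 0"
    using \<open>norm e = 1\<close> unfolding A_def M_def by (simp add: inner_diff_left power2_norm_eq_inner[symmetric])
  ultimately have "A e = 0" by simp
  hence "W e = M *\<^sub>R e" unfolding A_def by simp
  with that \<open>e \<in> S\<close> \<open>norm e = 1\<close> bound show ?thesis unfolding M_def by blast
qed

lemma finite_eigenvalues_of:
  fixes W :: "'a::euclidean_space \<Rightarrow> 'a"
  assumes sym: "\<And>u v. inner (W u) v = inner u (W v)"
  shows "finite (eigenvalues_of W)"
proof -
  define E where "E = eigenvalues_of W"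
  define v where "v l = (SOME v. v \<noteq> 0 \<and> W v = l *\<^sub>R v)" for l
  have v: "v l \<noteq> 0 \<and> W (v l) = l *\<^sub>R v l" if "l \<in> E" for l
    using that unfolding E_def eigenvalues_of_def v_def by (metis (mono_tags, lifting) mem_Collect_eq someI_ex)
  have "inj_on v E"
  proof (rule inj_onI)
    fix l1 l2 assume "l1 \<in> E" "l2 \<in> E" "v l1 = v l2"
    hence "l1 *\<^sub>R v l1 = l2 *\<^sub>R v l1" using v by metis
    thus "l1 = l2" using v[OF \<open>l1 \<in> E\<close>] by simp
  qed
  have "pairwise orthogonal (v ` E)"
  proof (rule pairwiseI)
    fix a b assume "a \<in> v ` E" "b \<in> v ` E" "a \<noteq> b"
    then obtain l1 l2 where l: "l1 \<in> E" "l2 \<in> E" "a = v l1" "b = v l2" "l1 \<noteq> l2" by blast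
    have "l1 * inner a b = inner (W a) b" using v[OF l(1)] l by simp
    also have "\<dots> = inner a (W b)" by (rule sym)
    also have "\<dots> = l2 * inner a b" using v[OF l(2)] l by simp
    finally have "(l1 - l2) * inner a b = 0" by (simp add: algebra_simps)
    thus "orthogonal a b" using l by (simp add: orthogonal_def)
  qed
  moreover have "0 \<notin> v ` E" using v by force
  ultimately have "finite (v ` E)"
    using pairwise_orthogonal_independent finiteI_independent by blast
  thus ?thesis using finite_imageD \<open>inj_on v E\<close> E_def by blast
qed

section \<open>Range, kernel and pseudo-inverse\<close>

lemma subspace_range_linear:
  assumes "linear W"
  shows "subspace (range W)"
  using linear_subspace_image[OF assms subspace_UNIV] by simp

lemma range_kernel_trivial:
  fixes W :: "'a::real_inner \<Rightarrow> 'a"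
  assumes sym: "\<And>u v. inner (W u) v = inner u (W v)"
    and "v \<in> range W" "W v = 0"
  shows "v = 0"
proof -
  obtain s where "v = W s" using \<open>v \<in> range W\<close> by blast
  hence "inner v v = inner s (W v)" using sym by simp
  thus ?thesis using \<open>W v = 0\<close> by simp
qed

lemma inner_kernel_range:
  fixes W :: "'a::real_inner \<Rightarrow> 'a"
  assumes sym: "\<And>u v. inner (W u) v = inner u (W v)"
    and "W k = 0" "p \<in> range W"
  shows "inner k p = 0"
  using assms sym[of k] by auto

lemma range_kernel_decomposition:
  fixes W :: "'a::euclidean_space \<Rightarrow> 'a"
  assumes lin: "linear W" and sym: "\<And>u v. inner (W u) v = inner u (W v)"
  obtains r k where "r \<in> range W" "W k = 0" "u = r + k"
proof -
  have span_range: "span (range W) = range W"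
    using subspace_range_linear[OF lin] by (simp add: span_eq_iff)
  obtain r k where "r \<in> span (range W)" and orth: "\<And>w. w \<in> span (range W) \<Longrightarrow> orthogonal k w"
    and "u = r + k"
    using orthogonal_subspace_decomp_exists by blast
  have "inner (W k) (W k) = inner k (W (W k))" by (rule sym)
  also have "\<dots> = 0" using orth span_range by (simp add: orthogonal_def)
  finally have "W k = 0" by simp
  with that \<open>r \<in> span (range W)\<close> \<open>u = r + k\<close> span_range show ?thesis by blast
qed

lemma orthogonal_kernel_imp_range:
  fixes W :: "'a::euclidean_space \<Rightarrow> 'a"
  assumes lin: "linear W" and sym: "\<And>u v. inner (W u) v = inner u (W v)"
    and orth: "\<And>k. W k = 0 \<Longrightarrow> inner g k = 0"
  shows "g \<in> range W"
proof -
  obtain r k where "r \<in> range W" "W k = 0" "g = r + k"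
    using range_kernel_decomposition[OF lin sym] by blast
  have "inner k k = inner g k - inner r k" using \<open>g = r + k\<close> by (simp add: inner_add_left)
  also have "\<dots> = 0"
    using orth[OF \<open>W k = 0\<close>] inner_kernel_range[OF sym \<open>W k = 0\<close> \<open>r \<in> range W\<close>]
    by (simp add: inner_commute)
  finally show ?thesis using \<open>g = r + k\<close> \<open>r \<in> range W\<close> by simp
qed

lemma pinv_eqI:
  fixes W :: "'a::real_inner \<Rightarrow> 'a"
  assumes lin: "linear W" and sym: "\<And>u v. inner (W u) v = inner u (W v)"
    and "v \<in> range W" "W v = p"
  shows "pinv W p = v"
  unfolding pinv_def
proof (rule the_equality)
  show "v \<in> range W \<and> W v = p" using assms by simp
next
  fix v' assume v': "v' \<in> range W \<and> W v' = p"
  have "v' - v \<in> range W"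
    using v' \<open>v \<in> range W\<close> by (intro subspace_diff[OF subspace_range_linear[OF lin]]) auto
  moreover have "W (v' - v) = 0" using v' \<open>W v = p\<close> linear_diff[OF lin] by simp
  ultimately have "v' - v = 0" by (rule range_kernel_trivial[OF sym])
  thus "v' = v" by simp
qed

lemma pinv_on_range:
  fixes W :: "'a::euclidean_space \<Rightarrow> 'a"
  assumes lin: "linear W" and sym: "\<And>u v. inner (W u) v = inner u (W v)"
    and "p \<in> range W"
  shows "pinv W p \<in> range W" "W (pinv W p) = p"
proof -
  obtain u where "p = W u" using \<open>p \<in> range W\<close> by blast
  obtain r k where "r \<in> range W" "W k = 0" "u = r + k"
    using range_kernel_decomposition[OF lin sym] by blast
  hence "W r = p" using \<open>p = W u\<close> linear_add[OF lin] by simp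
  hence "pinv W p = r" by (rule pinv_eqI[OF lin sym \<open>r \<in> range W\<close>])
  thus "pinv W p \<in> range W" "W (pinv W p) = p" using \<open>r \<in> range W\<close> \<open>W r = p\<close> by simp_all
qed

lemma pinv_linear_combination:
  fixes W :: "'a::euclidean_space \<Rightarrow> 'a"
  assumes lin: "linear W" and sym: "\<And>u v. inner (W u) v = inner u (W v)"
    and p: "p \<in> range W" and q: "q \<in> range W"
  shows "pinv W (a *\<^sub>R p + b *\<^sub>R q) = a *\<^sub>R pinv W p + b *\<^sub>R pinv W q"
proof (rule pinv_eqI[OF lin sym])
  have R: "subspace (range W)" by (rule subspace_range_linear[OF lin])
  show "a *\<^sub>R pinv W p + b *\<^sub>R pinv W q \<in> range W"
    using pinv_on_range(1)[OF lin sym p] pinv_on_range(1)[OF lin sym q]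
    by (intro subspace_add[OF R] subspace_scale[OF R])
  show "W (a *\<^sub>R pinv W p + b *\<^sub>R pinv W q) = a *\<^sub>R p + b *\<^sub>R q"
    using pinv_on_range(2)[OF lin sym p] pinv_on_range(2)[OF lin sym q]
    by (simp add: linear_add[OF lin] linear_scale[OF lin])
qed

lemma inner_pinv_commute:
  fixes W :: "'a::euclidean_space \<Rightarrow> 'a"
  assumes lin: "linear W" and sym: "\<And>u v. inner (W u) v = inner u (W v)"
    and "p \<in> range W" "q \<in> range W"
  shows "inner (pinv W p) q = inner (pinv W q) p"
proof -
  have "inner (pinv W p) q = inner (pinv W p) (W (pinv W q))"
    using pinv_on_range(2)[OF lin sym \<open>q \<in> range W\<close>] by simp
  also have "\<dots> = inner (W (pinv W p)) (pinv W q)" by (rule sym[symmetric])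
  also have "\<dots> = inner (pinv W q) p"
    using pinv_on_range(2)[OF lin sym \<open>p \<in> range W\<close>] by (simp add: inner_commute)
  finally show ?thesis .
qed

lemma inner_pinv_W:
  fixes W :: "'a::euclidean_space \<Rightarrow> 'a"
  assumes lin: "linear W" and sym: "\<And>u v. inner (W u) v = inner u (W v)"
    and "q \<in> range W"
  shows "inner (pinv W (W u)) q = inner u q"
proof -
  have Wq: "W (pinv W q) = q" by (rule pinv_on_range(2)[OF lin sym \<open>q \<in> range W\<close>])
  have "inner (pinv W (W u)) q = inner (W (pinv W (W u))) (pinv W q)"
    using sym[of "pinv W (W u)" "pinv W q"] Wq by simp
  also have "\<dots> = inner u q"
    using pinv_on_range(2)[OF lin sym rangeI] sym[of u "pinv W q"] Wq by simp
  finally show ?thesis .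
qed

lemma normWdag_sq_nonneg:
  fixes W :: "'a::euclidean_space \<Rightarrow> 'a"
  assumes lin: "linear W" and sym: "\<And>u v. inner (W u) v = inner u (W v)"
    and psd: "\<And>u. 0 \<le> inner (W u) u" and "p \<in> range W"
  shows "0 \<le> normWdag_sq W p"
  using psd[of "pinv W p"] pinv_on_range(2)[OF lin sym \<open>p \<in> range W\<close>]
  unfolding normWdag_sq_def by (simp add: inner_commute)

lemma normWdag_sq_three_point:
  fixes W :: "'a::euclidean_space \<Rightarrow> 'a"
  assumes lin: "linear W" and sym: "\<And>u v. inner (W u) v = inner u (W v)"
    and p: "p \<in> range W" and q: "q \<in> range W" and r: "r \<in> range W"
  shows "2 * inner (pinv W (p - q)) (p - r)
    = normWdag_sq W (p - r) - normWdag_sq W (q - r) + normWdag_sq W (p - q)"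
proof -
  have diff: "pinv W (a - b) = pinv W a - pinv W b" if "a \<in> range W" "b \<in> range W" for a b
    using pinv_linear_combination[OF lin sym that, of 1 "-1"] by simp
  show ?thesis
    unfolding normWdag_sq_def diff[OF p q] diff[OF p r] diff[OF q r] inner_diff_left inner_diff_right
    using inner_pinv_commute[OF lin sym p q] inner_pinv_commute[OF lin sym p r]
      inner_pinv_commute[OF lin sym q r]
    by (simp add: algebra_simps)
qed

lemma normWdag_sq_id: "normWdag_sq id p = (norm p)\<^sup>2"
proof -
  have "pinv id p = p" by (rule pinv_eqI) (auto simp: linear_iff)
  thus ?thesis by (simp add: normWdag_sq_def power2_norm_eq_inner)
qed

section \<open>Extreme eigenvalues\<close>

lemma inner_W_le_lambda_max:
  fixes W :: "'a::euclidean_space \<Rightarrow> 'a"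
  assumes lin: "linear W" and sym: "\<And>u v. inner (W u) v = inner u (W v)"
  shows "inner (W u) u \<le> lambda_max W * (norm u)\<^sup>2"
proof -
  obtain i :: 'a where "i \<in> Basis" using nonempty_Basis by blast
  hence "i \<noteq> 0" by auto
  obtain e where "norm e = 1" "W e = inner (W e) e *\<^sub>R e"
    and e_max: "\<And>u. inner (W u) u \<le> inner (W e) e * (norm u)\<^sup>2"
    using Rayleigh_quotient_maximizer[OF lin sym subspace_UNIV UNIV_I UNIV_I \<open>i \<noteq> 0\<close>] by (metis UNIV_I)
  have "inner (W e) e \<in> eigenvalues_of W"
    unfolding eigenvalues_of_def using \<open>norm e = 1\<close> \<open>W e = _\<close> by (intro CollectI exI[of _ e]) auto
  hence "inner (W e) e \<le> lambda_max W"
    unfolding lambda_max_def using finite_eigenvalues_of[OF sym] by simp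
  thus ?thesis using e_max[of u] by (meson mult_right_mono order_trans zero_le_power2)
qed

lemma lambda_min_pos_le_inner_W:
  fixes W :: "'a::euclidean_space \<Rightarrow> 'a"
  assumes lin: "linear W" and sym: "\<And>u v. inner (W u) v = inner u (W v)"
    and psd: "\<And>u. 0 \<le> inner (W u) u" and "v \<in> range W"
  shows "lambda_min_pos W * (norm v)\<^sup>2 \<le> inner (W v) v"
proof (cases "v = 0")
  case True thus ?thesis using lin by (simp add: linear_0)
next
  case False
  \<comment> \<open>maximising the Rayleigh quotient of \<open>-W\<close> on \<open>range W\<close> gives the least eigenvalue there\<close>
  have "linear (\<lambda>u. - W u)" using lin by (rule module_hom_neg)
  moreover have "inner (- W u) w = inner u (- W w)" for u w using sym by simp
  moreover have "- W u \<in> range W" if "u \<in> range W" for u by (metis lin linear_neg rangeI)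
  ultimately obtain e where "e \<in> range W" "norm e = 1" "- W e = inner (- W e) e *\<^sub>R e"
    and e_min: "\<And>u. u \<in> range W \<Longrightarrow> inner (- W u) u \<le> inner (- W e) e * (norm u)\<^sup>2"
    using Rayleigh_quotient_maximizer[of "\<lambda>u. - W u" "range W" v] subspace_range_linear[OF lin]
      \<open>v \<in> range W\<close> False by blast
  define m where "m = inner (W e) e"
  have "W e = m *\<^sub>R e" using \<open>- W e = _\<close> unfolding m_def by (simp add: minus_equation_iff)
  have "e \<noteq> 0" using \<open>norm e = 1\<close> by auto
  hence "m \<noteq> 0" using \<open>W e = m *\<^sub>R e\<close> range_kernel_trivial[OF sym \<open>e \<in> range W\<close>] by auto
  hence "0 < m" using psd[of e] unfolding m_def by simp
  with \<open>e \<noteq> 0\<close> \<open>W e = m *\<^sub>R e\<close> have "m \<in> {l \<in> eigenvalues_of W. l > 0}"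
    unfolding eigenvalues_of_def by blast
  hence "lambda_min_pos W \<le> m"
    unfolding lambda_min_pos_def using finite_eigenvalues_of[OF sym] by simp
  moreover have "m * (norm v)\<^sup>2 \<le> inner (W v) v"
    using e_min[OF \<open>v \<in> range W\<close>] unfolding m_def by simp
  ultimately show ?thesis by (meson mult_right_mono order_trans zero_le_power2)
qed

lemma norm_W_sq_le_lambda_max:
  fixes W :: "'a::euclidean_space \<Rightarrow> 'a"
  assumes lin: "linear W" and sym: "\<And>u v. inner (W u) v = inner u (W v)"
    and psd: "\<And>u. 0 \<le> inner (W u) u"
  shows "(norm (W v))\<^sup>2 \<le> lambda_max W * inner (W v) v"
proof -
  define a where "a = inner (W v) v"
  define b where "b = inner (W v) (W v)"
  have "0 \<le> a" "0 \<le> b" unfolding a_def b_def by (simp_all add: psd)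
  obtain i :: 'a where "i \<in> Basis" using nonempty_Basis by blast
  hence "0 \<le> lambda_max W"
    using psd[of i] inner_W_le_lambda_max[OF lin sym, of i] by simp
  have "b\<^sup>2 \<le> a * inner (W (W v)) (W v)"
    unfolding a_def b_def by (rule Cauchy_Schwarz_psd_on[OF lin sym psd subspace_UNIV]) auto
  also have "\<dots> \<le> a * (lambda_max W * b)"
    using inner_W_le_lambda_max[OF lin sym, of "W v"] \<open>0 \<le> a\<close>
    unfolding b_def by (simp add: mult_left_mono power2_norm_eq_inner)
  finally have "b * b \<le> (lambda_max W * a) * b" by (simp add: power2_eq_square mult_ac)
  hence "b \<le> lambda_max W * a"
    using \<open>0 \<le> a\<close> \<open>0 \<le> b\<close> \<open>0 \<le> lambda_max W\<close> by (cases "b = 0") auto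
  thus ?thesis unfolding a_def b_def by (simp add: power2_norm_eq_inner)
qed

lemma lambda_min_pos_le_norm_W_sq:
  fixes W :: "'a::euclidean_space \<Rightarrow> 'a"
  assumes lin: "linear W" and sym: "\<And>u v. inner (W u) v = inner u (W v)"
    and psd: "\<And>u. 0 \<le> inner (W u) u" and "v \<in> range W"
  shows "lambda_min_pos W * inner (W v) v \<le> (norm (W v))\<^sup>2"
proof (cases "0 < lambda_min_pos W \<and> 0 < inner (W v) v")
  case True
  define a where "a = inner (W v) v"
  have "lambda_min_pos W * a * a \<le> lambda_min_pos W * ((norm (W v))\<^sup>2 * (norm v)\<^sup>2)"
    using Cauchy_Schwarz_ineq[of "W v" v] True
    unfolding a_def power2_norm_eq_inner by (simp add: power2_eq_square mult.assoc)
  also have "\<dots> = (norm (W v))\<^sup>2 * (lambda_min_pos W * (norm v)\<^sup>2)" by (simp add: mult_ac)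
  also have "\<dots> \<le> (norm (W v))\<^sup>2 * a"
    unfolding a_def by (intro mult_left_mono lambda_min_pos_le_inner_W[OF assms]) simp
  finally show ?thesis using True unfolding a_def by simp
next
  case False
  have "lambda_min_pos W * inner (W v) v \<le> 0"
  proof (cases "0 < lambda_min_pos W")
    case True
    with False psd[of v] have "inner (W v) v = 0" by simp
    thus ?thesis by simp
  qed (use psd[of v] in \<open>simp add: mult_nonpos_nonneg\<close>)
  thus ?thesis using zero_le_power2[of "norm (W v)"] by linarith
qed

lemma norm_sq_le_lambda_max_normWdag_sq:
  fixes W :: "'a::euclidean_space \<Rightarrow> 'a"
  assumes lin: "linear W" and sym: "\<And>u v. inner (W u) v = inner u (W v)"
    and psd: "\<And>u. 0 \<le> inner (W u) u" and "p \<in> range W"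
  shows "(norm p)\<^sup>2 \<le> lambda_max W * normWdag_sq W p"
  using norm_W_sq_le_lambda_max[OF lin sym psd, of "pinv W p"] pinv_on_range(2)[OF lin sym \<open>p \<in> range W\<close>]
  unfolding normWdag_sq_def by (simp add: inner_commute)

lemma lambda_min_pos_normWdag_sq_le:
  fixes W :: "'a::euclidean_space \<Rightarrow> 'a"
  assumes lin: "linear W" and sym: "\<And>u v. inner (W u) v = inner u (W v)"
    and psd: "\<And>u. 0 \<le> inner (W u) u" and "p \<in> range W"
  shows "lambda_min_pos W * normWdag_sq W p \<le> (norm p)\<^sup>2"
  using lambda_min_pos_le_norm_W_sq[OF lin sym psd pinv_on_range(1)[OF lin sym \<open>p \<in> range W\<close>]]
    pinv_on_range(2)[OF lin sym \<open>p \<in> range W\<close>]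
  unfolding normWdag_sq_def by (simp add: inner_commute)

section \<open>The quadratic \<open>h\<close>\<close>

lemma Dh_eq_hfun:
  fixes u1 u2 v1 v2 :: "'a::real_inner"
  assumes "\<mu> \<noteq> 0"
  shows "Dh \<mu> \<nu> u1 u2 v1 v2 = hfun \<mu> \<nu> (u1 - v1) (u2 - v2)"
  unfolding Dh_def hfun_def grad_y_h_def grad_z_h_def power2_norm_eq_inner
  using assms
  by (simp add: inner_simps inner_commute algebra_simps add_divide_distrib diff_divide_distrib)

lemma grad_y_h_diff:
  "grad_y_h \<mu> \<nu> a b - grad_y_h \<mu> \<nu> c d = grad_y_h \<mu> \<nu> (a - c) (b - d)"
  unfolding grad_y_h_def by (simp add: algebra_simps)

lemma grad_z_h_diff:
  "grad_z_h \<mu> \<nu> a b - grad_z_h \<mu> \<nu> c d = grad_z_h \<mu> \<nu> (a - c) (b - d)"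
  unfolding grad_z_h_def by (simp add: algebra_simps)

lemma inner_grad_h:
  fixes d1 d2 p1 p2 :: "'a::real_inner"
  shows "inner (grad_y_h \<mu> \<nu> d1 d2) p1 + inner (grad_z_h \<mu> \<nu> d1 d2) p2
    = hfun \<mu> \<nu> d1 d2 + hfun \<mu> \<nu> p1 p2 - hfun \<mu> \<nu> (p1 - d1) (p2 - d2)"
  unfolding hfun_def grad_y_h_def grad_z_h_def power2_norm_eq_inner
  by (simp add: inner_simps inner_commute algebra_simps add_divide_distrib diff_divide_distrib)

lemma hfun_scaleR:
  fixes u1 u2 :: "'a::real_inner"
  shows "hfun \<mu> \<nu> (s *\<^sub>R u1) (s *\<^sub>R u2) = s\<^sup>2 * hfun \<mu> \<nu> u1 u2"
  unfolding hfun_def scaleR_add_right[symmetric] norm_scaleR power_mult_distrib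
  by (simp add: algebra_simps)

lemma hfun_nonneg:
  fixes u1 u2 :: "'a::real_inner"
  assumes "0 \<le> \<mu>" "0 \<le> \<nu>"
  shows "0 \<le> hfun \<mu> \<nu> u1 u2"
  unfolding hfun_def using assms by simp

lemma norm_add_sq_le:
  fixes u v :: "'a::real_inner"
  shows "(norm (u + v))\<^sup>2 \<le> 2 * (norm u)\<^sup>2 + 2 * (norm v)\<^sup>2"
proof -
  have "(norm (u + v))\<^sup>2 + (norm (u - v))\<^sup>2 = 2 * (norm u)\<^sup>2 + 2 * (norm v)\<^sup>2"
    unfolding power2_norm_eq_inner by (simp add: inner_simps inner_commute)
  thus ?thesis using zero_le_power2[of "norm (u - v)"] by linarith
qed

lemma hfun_le:
  fixes u1 u2 :: "'a::real_inner"
  assumes "0 < \<mu>"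
  shows "hfun \<mu> \<nu> u1 u2 \<le> (2 / \<mu> + \<nu> / 2) * (norm u1)\<^sup>2 + 2 / \<mu> * (norm u2)\<^sup>2"
proof -
  have "1 / \<mu> * (norm (u1 + u2))\<^sup>2 \<le> 1 / \<mu> * (2 * (norm u1)\<^sup>2 + 2 * (norm u2)\<^sup>2)"
    using assms norm_add_sq_le[of u1 u2] by (intro mult_left_mono) auto
  thus ?thesis unfolding hfun_def by (simp add: algebra_simps)
qed

lemma hfun_ge:
  fixes u1 u2 :: "'a::real_inner"
  assumes "0 \<le> \<beta>" "\<beta> \<le> 1 / \<mu>" "\<beta> \<le> \<nu> / 3"
  shows "\<beta> * (norm u1)\<^sup>2 + \<beta> * (norm u2)\<^sup>2 \<le> 2 * hfun \<mu> \<nu> u1 u2"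
proof -
  have "\<beta> * (norm u2)\<^sup>2 \<le> \<beta> * (2 * (norm (u1 + u2))\<^sup>2 + 2 * (norm u1)\<^sup>2)"
    using norm_add_sq_le[of "u1 + u2" "- u1"] \<open>0 \<le> \<beta>\<close> by (intro mult_left_mono) auto
  moreover have "\<beta> * (norm (u1 + u2))\<^sup>2 \<le> 1 / \<mu> * (norm (u1 + u2))\<^sup>2"
    using \<open>\<beta> \<le> 1 / \<mu>\<close> by (intro mult_right_mono) auto
  moreover have "3 * \<beta> * (norm u1)\<^sup>2 \<le> \<nu> * (norm u1)\<^sup>2"
    using \<open>\<beta> \<le> \<nu> / 3\<close> by (intro mult_right_mono) auto
  ultimately show ?thesis unfolding hfun_def by (simp add: algebra_simps)
qed

lemma le_one_divide_swap:
  fixes a b :: real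
  assumes "0 < a" "0 < b" "a \<le> 1 / b"
  shows "b \<le> 1 / a"
  using assms by (simp add: pos_le_divide_eq mult.commute)

lemma hfun_le_step_sizes:
  fixes W :: "'a::euclidean_space \<Rightarrow> 'a"
  assumes lin: "linear W" and sym: "\<And>u v. inner (W u) v = inner u (W v)"
    and psd: "\<And>u. 0 \<le> inner (W u) u" and "dz \<in> range W"
    and "0 < \<mu>" "0 \<le> \<nu>" "0 < \<sigma>" "0 < \<theta>" "0 < lam"
    and th: "\<theta> \<le> 1 / (\<sigma> * (4 / \<mu> + \<nu>))"
    and la: "lam \<le> 1 / (4 * \<sigma> * lambda_max W / \<mu>)"
  shows "2 * \<sigma> * hfun \<mu> \<nu> dy dz \<le> 1 / \<theta> * (norm dy)\<^sup>2 + 1 / lam * normWdag_sq W dz"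
proof -
  have "0 \<le> normWdag_sq W dz" by (rule normWdag_sq_nonneg[OF lin sym psd \<open>dz \<in> range W\<close>])
  have "0 < \<sigma> * (4 / \<mu> + \<nu>)" using assms by (simp add: add_pos_nonneg)
  hence th': "\<sigma> * (4 / \<mu> + \<nu>) \<le> 1 / \<theta>"
    using le_one_divide_swap \<open>0 < \<theta>\<close> th by blast
  have la': "4 * \<sigma> * lambda_max W / \<mu> \<le> 1 / lam"
  proof (cases "0 < 4 * \<sigma> * lambda_max W / \<mu>")
    case True thus ?thesis using le_one_divide_swap \<open>0 < lam\<close> la by blast
  next
    case False
    moreover have "0 < 1 / lam" using \<open>0 < lam\<close> by simp
    ultimately show ?thesis by linarith
  qed
  have "2 * \<sigma> * hfun \<mu> \<nu> dy dz \<le> 2 * \<sigma> * ((2 / \<mu> + \<nu> / 2) * (norm dy)\<^sup>2 + 2 / \<mu> * (norm dz)\<^sup>2)"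
    using hfun_le[OF \<open>0 < \<mu>\<close>] \<open>0 < \<sigma>\<close> by simp
  also have "\<dots> = \<sigma> * (4 / \<mu> + \<nu>) * (norm dy)\<^sup>2 + 4 * \<sigma> / \<mu> * (norm dz)\<^sup>2"
    by (simp add: algebra_simps)
  also have "\<dots> \<le> 1 / \<theta> * (norm dy)\<^sup>2 + 4 * \<sigma> / \<mu> * (lambda_max W * normWdag_sq W dz)"
    using th' norm_sq_le_lambda_max_normWdag_sq[OF lin sym psd \<open>dz \<in> range W\<close>] assms
    by (intro add_mono mult_right_mono mult_left_mono) auto
  also have "\<dots> \<le> 1 / \<theta> * (norm dy)\<^sup>2 + 1 / lam * normWdag_sq W dz"
    using mult_right_mono[OF la' \<open>0 \<le> normWdag_sq W dz\<close>] by simp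
  finally show ?thesis .
qed

lemma hfun_ge_normWdag_sq:
  fixes W :: "'a::euclidean_space \<Rightarrow> 'a"
  assumes lin: "linear W" and sym: "\<And>u v. inner (W u) v = inner u (W v)"
    and psd: "\<And>u. 0 \<le> inner (W u) u" and "dz \<in> range W"
    and "0 \<le> \<beta>" "\<beta> \<le> 1 / \<mu>" "\<beta> \<le> \<nu> / 3" "\<gamma> \<le> lambda_min_pos W * \<beta>"
  shows "\<beta> * (norm dy)\<^sup>2 + \<gamma> * normWdag_sq W dz \<le> 2 * hfun \<mu> \<nu> dy dz"
proof -
  have "\<gamma> * normWdag_sq W dz \<le> \<beta> * (lambda_min_pos W * normWdag_sq W dz)"
    using mult_right_mono[OF \<open>\<gamma> \<le> _\<close> normWdag_sq_nonneg[OF lin sym psd \<open>dz \<in> range W\<close>]]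
    by (simp add: mult_ac)
  also have "\<dots> \<le> \<beta> * (norm dz)\<^sup>2"
    using lambda_min_pos_normWdag_sq_le[OF lin sym psd \<open>dz \<in> range W\<close>] \<open>0 \<le> \<beta>\<close> by (rule mult_left_mono)
  finally show ?thesis using hfun_ge[of \<beta> \<mu> \<nu> dy dz] assms by linarith
qed

section \<open>One step of the algorithm\<close>

lemma subspace_consensus_space: "subspace consensus_space"
  unfolding subspace_def consensus_space_def by (simp add: vector_add_component) metis

lemma gradient_orthogonal_at_subspace_min:
  fixes F :: "'a::real_inner \<Rightarrow> real"
  assumes grad: "(F has_derivative (\<lambda>h. inner g h)) (at x)"
    and S: "subspace S" "x \<in> S" and min: "\<And>u. u \<in> S \<Longrightarrow> F x \<le> F u" and "u \<in> S"
  shows "inner g u = 0"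
proof -
  define f where "f t = F (x + t *\<^sub>R u)" for t :: real
  have "((\<lambda>t::real. x + t *\<^sub>R u) has_derivative (\<lambda>t. t *\<^sub>R u)) (at 0)"
    by (intro derivative_eq_intros) auto
  moreover have "(F has_derivative (\<lambda>h. inner g h)) (at (x + 0 *\<^sub>R u))" using grad by simp
  ultimately have "(f has_derivative (\<lambda>t. inner g (t *\<^sub>R u))) (at 0)"
    unfolding f_def by (rule has_derivative_compose)
  hence "(f has_derivative (\<lambda>t. inner g u * t)) (at 0)" by (simp add: mult.commute)
  hence "(f has_field_derivative inner g u) (at 0)"
    by (simp add: has_field_derivative_def)
  moreover have "\<forall>t. \<bar>0 - t\<bar> < 1 \<longrightarrow> f 0 \<le> f t"
    unfolding f_def using min S \<open>u \<in> S\<close> by (simp add: subspace_add subspace_scale)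
  ultimately show ?thesis using DERIV_local_min[of f _ 0 1] by simp
qed

lemma proximal_step_three_point_normWdag_sq:
  fixes W :: "'a::euclidean_space \<Rightarrow> 'a"
  assumes lin: "linear W" and sym: "\<And>u v. inner (W u) v = inner u (W v)"
    and psd: "\<And>u. 0 \<le> inner (W u) u"
    and z0: "z0 \<in> range W" and z1: "z1 \<in> range W" and g: "g \<in> range W" and s: "s \<in> range W"
    and "0 < lam" "0 \<le> \<gamma>" and step: "z1 - z0 = lam *\<^sub>R (\<gamma> *\<^sub>R (g - z1) - W u)"
  shows "1 / lam * normWdag_sq W (z1 - s) \<le> 1 / lam * normWdag_sq W (z0 - s)
    - 1 / lam * normWdag_sq W (z1 - z0) + \<gamma> * normWdag_sq W (g - s) - \<gamma> * normWdag_sq W (z1 - s)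
    - 2 * inner u (z1 - s)"
proof -
  have R: "subspace (range W)" by (rule subspace_range_linear[OF lin])
  have gz1: "g - z1 \<in> range W" using g z1 by (rule subspace_diff[OF R])
  define I where "I = inner (pinv W (z1 - z0)) (z1 - s)"
  define J where "J = inner (pinv W (g - z1)) (g - s)"
  define K where "K = inner u (z1 - s)"
  have "z1 - z0 = (lam * \<gamma>) *\<^sub>R (g - z1) + (- lam) *\<^sub>R W u"
    unfolding step by (simp add: algebra_simps)
  hence "pinv W (z1 - z0) = (lam * \<gamma>) *\<^sub>R pinv W (g - z1) + (- lam) *\<^sub>R pinv W (W u)"
    by (simp only: pinv_linear_combination[OF lin sym gz1 rangeI])
  hence "I = lam * (\<gamma> * inner (pinv W (g - z1)) (z1 - s) - K)"
    unfolding I_def K_def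
    by (simp only: inner_add_left inner_scaleR_left inner_pinv_W[OF lin sym subspace_diff[OF R z1 s]])
      (simp add: algebra_simps)
  also have "inner (pinv W (g - z1)) (z1 - s) = J - normWdag_sq W (g - z1)"
    unfolding J_def normWdag_sq_def by (simp add: inner_simps)
  finally have I: "I = lam * (\<gamma> * (J - normWdag_sq W (g - z1)) - K)" .
  have "2 * I = normWdag_sq W (z1 - s) - normWdag_sq W (z0 - s) + normWdag_sq W (z1 - z0)"
    unfolding I_def by (rule normWdag_sq_three_point[OF lin sym z1 z0 s])
  hence N0: "normWdag_sq W (z0 - s) = normWdag_sq W (z1 - s) + normWdag_sq W (z1 - z0) - 2 * I"
    by linarith
  have "2 * J = normWdag_sq W (g - s) - normWdag_sq W (z1 - s) + normWdag_sq W (g - z1)"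
    unfolding J_def by (rule normWdag_sq_three_point[OF lin sym g z1 s])
  hence Ng: "normWdag_sq W (g - s) = 2 * J + normWdag_sq W (z1 - s) - normWdag_sq W (g - z1)"
    by linarith
  have "1 / lam * normWdag_sq W (z0 - s) - 1 / lam * normWdag_sq W (z1 - z0)
      + \<gamma> * normWdag_sq W (g - s) - \<gamma> * normWdag_sq W (z1 - s) - 2 * K
      - 1 / lam * normWdag_sq W (z1 - s) = \<gamma> * normWdag_sq W (g - z1)"
    unfolding N0 Ng I using \<open>0 < lam\<close> by (simp add: field_simps)
  moreover have "0 \<le> \<gamma> * normWdag_sq W (g - z1)"
    using \<open>0 \<le> \<gamma>\<close> normWdag_sq_nonneg[OF lin sym psd gz1] by simp
  ultimately show ?thesis unfolding K_def by linarith
qed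

lemma proximal_step_three_point:
  fixes y0 y1 g s r :: "'a::euclidean_space"
  assumes "0 < \<theta>" "0 \<le> \<beta>" and step: "y1 - y0 = \<theta> *\<^sub>R (\<beta> *\<^sub>R (g - y1) + r)"
  shows "1 / \<theta> * (norm (y1 - s))\<^sup>2 \<le> 1 / \<theta> * (norm (y0 - s))\<^sup>2 - 1 / \<theta> * (norm (y1 - y0))\<^sup>2
    + \<beta> * (norm (g - s))\<^sup>2 - \<beta> * (norm (y1 - s))\<^sup>2 + 2 * inner r (y1 - s)"
proof -
  have "1 / \<theta> * normWdag_sq id (y1 - s) \<le> 1 / \<theta> * normWdag_sq id (y0 - s)
    - 1 / \<theta> * normWdag_sq id (y1 - y0) + \<beta> * normWdag_sq id (g - s) - \<beta> * normWdag_sq id (y1 - s)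
    - 2 * inner (- r) (y1 - s)"
    by (rule proximal_step_three_point_normWdag_sq) (use assms in \<open>auto simp: linear_iff\<close>)
  thus ?thesis by (simp add: normWdag_sq_id)
qed

lemma interpolation_recovers_iterate:
  fixes a0 a1 f0 f1 g s :: "'a::real_vector"
  assumes "\<sigma> \<noteq> 0" and f1: "f1 = g + \<sigma> *\<^sub>R (a1 - a0)" and g: "g = \<sigma> *\<^sub>R a0 + (1 - \<sigma>) *\<^sub>R f0"
  shows "a1 - s = (1 / \<sigma>) *\<^sub>R (f1 - s) - ((1 - \<sigma>) / \<sigma>) *\<^sub>R (f0 - s)"
proof -
  have "\<sigma> *\<^sub>R (a1 - s) = (f1 - s) - (1 - \<sigma>) *\<^sub>R (f0 - s)"
    unfolding f1 g by (simp add: algebra_simps)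
  also have "\<dots> = \<sigma> *\<^sub>R ((1 / \<sigma>) *\<^sub>R (f1 - s) - ((1 - \<sigma>) / \<sigma>) *\<^sub>R (f0 - s))"
    using \<open>\<sigma> \<noteq> 0\<close> by (simp add: scaleR_diff_right)
  finally show ?thesis using \<open>\<sigma> \<noteq> 0\<close> by simp
qed

lemma gradient_coupling:
  fixes y0 y1 z0 z1 yf0 yf1 zf0 zf1 yg zg ys zs :: "'a::real_inner"
  assumes "0 < \<sigma>" "\<sigma> \<le> 1" "0 \<le> \<mu>" "0 \<le> \<nu>"
    and yg: "yg = \<sigma> *\<^sub>R y0 + (1 - \<sigma>) *\<^sub>R yf0" and zg: "zg = \<sigma> *\<^sub>R z0 + (1 - \<sigma>) *\<^sub>R zf0"
    and yf1: "yf1 = yg + \<sigma> *\<^sub>R (y1 - y0)" and zf1: "zf1 = zg + \<sigma> *\<^sub>R (z1 - z0)"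
  shows "2 / \<sigma> * hfun \<mu> \<nu> (yf1 - ys) (zf1 - zs) - 2 * (1 - \<sigma>) / \<sigma> * hfun \<mu> \<nu> (yf0 - ys) (zf0 - zs)
      + 2 * hfun \<mu> \<nu> (yg - ys) (zg - zs)
    \<le> 2 * (inner (grad_y_h \<mu> \<nu> (yg - ys) (zg - zs)) (y1 - ys)
        + inner (grad_z_h \<mu> \<nu> (yg - ys) (zg - zs)) (z1 - zs))
      + 2 * \<sigma> * hfun \<mu> \<nu> (y1 - y0) (z1 - z0)"
proof -
  define gy where "gy = grad_y_h \<mu> \<nu> (yg - ys) (zg - zs)"
  define gz where "gz = grad_z_h \<mu> \<nu> (yg - ys) (zg - zs)"
  define hd where "hd = hfun \<mu> \<nu> (yg - ys) (zg - zs)"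
  define hp where "hp = hfun \<mu> \<nu> (yf1 - ys) (zf1 - zs)"
  define hq where "hq = hfun \<mu> \<nu> (yf0 - ys) (zf0 - zs)"
  define hs where "hs = hfun \<mu> \<nu> (y1 - y0) (z1 - z0)"
  define hr where "hr = hfun \<mu> \<nu> (yf0 - yg) (zf0 - zg)"
  have "\<sigma> \<noteq> 0" using \<open>0 < \<sigma>\<close> by simp
  have "inner gy (y1 - ys) + inner gz (z1 - zs)
      = 1 / \<sigma> * (inner gy (yf1 - ys) + inner gz (zf1 - zs))
        - (1 - \<sigma>) / \<sigma> * (inner gy (yf0 - ys) + inner gz (zf0 - zs))"
    unfolding interpolation_recovers_iterate[OF \<open>\<sigma> \<noteq> 0\<close> yf1 yg, of ys]
      interpolation_recovers_iterate[OF \<open>\<sigma> \<noteq> 0\<close> zf1 zg, of zs]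
    by (simp add: inner_diff_right algebra_simps)
  also have "inner gy (yf1 - ys) + inner gz (zf1 - zs) = hd + hp - \<sigma>\<^sup>2 * hs"
    unfolding gy_def gz_def hd_def hp_def hs_def inner_grad_h
    by (simp add: yf1 zf1 hfun_scaleR[symmetric])
  also have "inner gy (yf0 - ys) + inner gz (zf0 - zs) = hd + hq - hr"
    unfolding gy_def gz_def hd_def hq_def hr_def inner_grad_h by simp
  finally have coupling: "2 * (inner gy (y1 - ys) + inner gz (z1 - zs)) + 2 * \<sigma> * hs
      = 2 / \<sigma> * hp - 2 * (1 - \<sigma>) / \<sigma> * hq + 2 * hd + 2 * ((1 - \<sigma>) / \<sigma> * hr)"
    using \<open>\<sigma> \<noteq> 0\<close> by (simp add: field_simps power2_eq_square)
  have "0 \<le> (1 - \<sigma>) / \<sigma> * hr"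
    unfolding hr_def using assms by (simp add: hfun_nonneg)
  thus ?thesis using coupling unfolding gy_def gz_def hd_def hp_def hq_def hs_def by linarith
qed

lemma iterates_in_range:
  fixes W :: "'a::real_vector \<Rightarrow> 'a" and z zf zg g :: "nat \<Rightarrow> 'a"
  assumes lin: "linear W" and "0 \<le> lam * \<gamma>"
    and "z 0 \<in> range W" "zf 0 = z 0"
    and zg: "\<And>k. zg k = \<sigma> *\<^sub>R z k + (1 - \<sigma>) *\<^sub>R zf k"
    and z_upd: "\<And>k. z (Suc k) = z k + (lam * \<gamma>) *\<^sub>R (zg k - z (Suc k)) - lam *\<^sub>R W (g k)"
    and zf_upd: "\<And>k. zf (Suc k) = zg k + \<sigma> *\<^sub>R (z (Suc k) - z k)"
  shows "z k \<in> range W \<and> zf k \<in> range W"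
proof (induction k)
  case 0 thus ?case using assms by simp
next
  case (Suc k)
  have R: "subspace (range W)" by (rule subspace_range_linear[OF lin])
  have "zg k \<in> range W" using Suc zg[of k] R by (simp add: subspace_add subspace_scale)
  have "(1 + lam * \<gamma>) *\<^sub>R z (Suc k) = z k + (lam * \<gamma>) *\<^sub>R zg k - lam *\<^sub>R W (g k)"
    using arg_cong[OF z_upd[of k], of "\<lambda>v. v + (lam * \<gamma>) *\<^sub>R z (Suc k)"] by (simp add: algebra_simps)
  also have "\<dots> \<in> range W"
    using Suc \<open>zg k \<in> range W\<close> R by (simp add: subspace_add subspace_scale subspace_diff)
  finally have "(1 / (1 + lam * \<gamma>)) *\<^sub>R ((1 + lam * \<gamma>) *\<^sub>R z (Suc k)) \<in> range W"
    by (rule subspace_scale[OF R])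
  hence "z (Suc k) \<in> range W" using \<open>0 \<le> lam * \<gamma>\<close> by simp
  moreover have "zf (Suc k) \<in> range W"
    using zf_upd[of k] \<open>zg k \<in> range W\<close> \<open>z (Suc k) \<in> range W\<close> Suc R
    by (simp add: subspace_add subspace_scale subspace_diff)
  ultimately show ?case ..
qed

lemma one_step_inequality:
  fixes W :: "'a::euclidean_space \<Rightarrow> 'a"
    and y0 y1 z0 z1 yf0 yf1 zf0 zf1 yg zg x1 xs ys zs :: 'a
  assumes lin: "linear W" and sym: "\<And>u v. inner (W u) v = inner u (W v)"
    and psd: "\<And>u. 0 \<le> inner (W u) u"
    and z0: "z0 \<in> range W" and z1: "z1 \<in> range W" and zf0: "zf0 \<in> range W" and zs: "zs \<in> range W"
    and "W xs = 0" and saddle: "ys + zs = - (\<mu> / 2) *\<^sub>R xs"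
    and pos: "0 < \<mu>" "0 < \<theta>" "0 < lam" "0 < \<beta>" "0 < \<gamma>" "0 < \<nu>" "0 < \<sigma>" "\<sigma> < 1"
    and yg: "yg = \<sigma> *\<^sub>R y0 + (1 - \<sigma>) *\<^sub>R yf0" and zg: "zg = \<sigma> *\<^sub>R z0 + (1 - \<sigma>) *\<^sub>R zf0"
    and y_upd: "y1 = y0 + (\<theta> * \<beta>) *\<^sub>R (yg - y1) - \<theta> *\<^sub>R grad_y_h \<mu> \<nu> yg zg + (\<theta> * \<nu>) *\<^sub>R y1 - \<theta> *\<^sub>R x1"
    and z_upd: "z1 = z0 + (lam * \<gamma>) *\<^sub>R (zg - z1) - lam *\<^sub>R W (grad_z_h \<mu> \<nu> yg zg)"
    and yf1: "yf1 = yg + \<sigma> *\<^sub>R (y1 - y0)" and zf1: "zf1 = zg + \<sigma> *\<^sub>R (z1 - z0)"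
    and th: "\<theta> \<le> 1 / (\<sigma> * (4 / \<mu> + \<nu>))"
    and la: "lam \<le> 1 / (4 * \<sigma> * lambda_max W / \<mu>)"
    and be: "\<beta> \<le> min (1 / \<mu>) (\<nu> / 3)"
    and ga: "\<gamma> \<le> lambda_min_pos W * \<beta>"
  shows "normM_sq W \<theta> lam (y1 - ys) (z1 - zs)
     \<le> normM_sq W \<theta> lam (y0 - ys) (z0 - zs)
        - (\<beta> - 2 * \<nu>) * (norm (y1 - ys))\<^sup>2
        - \<gamma> * normWdag_sq W (z1 - zs)
        + 2 * (1 - \<sigma>) / \<sigma> * Dh \<mu> \<nu> yf0 zf0 ys zs
        - 2 / \<sigma> * Dh \<mu> \<nu> yf1 zf1 ys zs
        - 2 * inner (x1 - xs) (y1 - ys)"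
proof -
  have R: "subspace (range W)" by (rule subspace_range_linear[OF lin])
  have zg_range: "zg \<in> range W" unfolding zg using z0 zf0 by (intro subspace_add[OF R] subspace_scale[OF R])
  define gy where "gy = grad_y_h \<mu> \<nu> (yg - ys) (zg - zs)"
  define gz where "gz = grad_z_h \<mu> \<nu> (yg - ys) (zg - zs)"
  have "grad_y_h \<mu> \<nu> ys zs = \<nu> *\<^sub>R ys - xs" "grad_z_h \<mu> \<nu> ys zs = - xs"
    unfolding grad_y_h_def grad_z_h_def saddle using pos by simp_all
  hence grad_y: "grad_y_h \<mu> \<nu> yg zg = gy + \<nu> *\<^sub>R ys - xs"
    and grad_z: "grad_z_h \<mu> \<nu> yg zg = gz - xs"
    unfolding gy_def gz_def by (simp_all add: grad_y_h_diff[symmetric] grad_z_h_diff[symmetric])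
  have "y1 - y0 = \<theta> *\<^sub>R (\<beta> *\<^sub>R (yg - y1) + (\<nu> *\<^sub>R (y1 - ys) - (x1 - xs) - gy))"
    using arg_cong[OF y_upd, of "\<lambda>v. v - y0"] by (simp add: grad_y algebra_simps)
  from proximal_step_three_point[OF pos(2) _ this, of ys] pos
  have y_step: "1 / \<theta> * (norm (y1 - ys))\<^sup>2 \<le> 1 / \<theta> * (norm (y0 - ys))\<^sup>2 - 1 / \<theta> * (norm (y1 - y0))\<^sup>2
      + \<beta> * (norm (yg - ys))\<^sup>2 - \<beta> * (norm (y1 - ys))\<^sup>2
      + 2 * (\<nu> * (norm (y1 - ys))\<^sup>2 - inner (x1 - xs) (y1 - ys) - inner gy (y1 - ys))"
    by (simp add: inner_diff_left power2_norm_eq_inner)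
  have "z1 - z0 = lam *\<^sub>R (\<gamma> *\<^sub>R (zg - z1) - W (grad_z_h \<mu> \<nu> yg zg))"
    using arg_cong[OF z_upd, of "\<lambda>v. v - z0"] by (simp add: algebra_simps)
  from proximal_step_three_point_normWdag_sq[OF lin sym psd z0 z1 zg_range zs pos(3) _ this]
  have z_step: "1 / lam * normWdag_sq W (z1 - zs) \<le> 1 / lam * normWdag_sq W (z0 - zs)
      - 1 / lam * normWdag_sq W (z1 - z0) + \<gamma> * normWdag_sq W (zg - zs)
      - \<gamma> * normWdag_sq W (z1 - zs) - 2 * inner gz (z1 - zs)"
    using pos inner_kernel_range[OF sym \<open>W xs = 0\<close> subspace_diff[OF R z1 zs]]
    by (simp add: grad_z inner_diff_left)
  have coupling: "2 / \<sigma> * hfun \<mu> \<nu> (yf1 - ys) (zf1 - zs) - 2 * (1 - \<sigma>) / \<sigma> * hfun \<mu> \<nu> (yf0 - ys) (zf0 - zs)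
      + 2 * hfun \<mu> \<nu> (yg - ys) (zg - zs)
      \<le> 2 * (inner gy (y1 - ys) + inner gz (z1 - zs)) + 2 * \<sigma> * hfun \<mu> \<nu> (y1 - y0) (z1 - z0)"
    unfolding gy_def gz_def using pos by (intro gradient_coupling yg zg yf1 zf1) auto
  have "2 * \<sigma> * hfun \<mu> \<nu> (y1 - y0) (z1 - z0)
      \<le> 1 / \<theta> * (norm (y1 - y0))\<^sup>2 + 1 / lam * normWdag_sq W (z1 - z0)"
    using pos by (intro hfun_le_step_sizes[OF lin sym psd subspace_diff[OF R z1 z0] _ _ _ _ _ th la]) auto
  moreover have "\<beta> * (norm (yg - ys))\<^sup>2 + \<gamma> * normWdag_sq W (zg - zs) \<le> 2 * hfun \<mu> \<nu> (yg - ys) (zg - zs)"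
    using pos be by (intro hfun_ge_normWdag_sq[OF lin sym psd subspace_diff[OF R zg_range zs] _ _ _ ga]) auto
  moreover have "(\<beta> - 2 * \<nu>) * (norm (y1 - ys))\<^sup>2 = \<beta> * (norm (y1 - ys))\<^sup>2 - 2 * (\<nu> * (norm (y1 - ys))\<^sup>2)"
    by (simp add: algebra_simps)
  ultimately show ?thesis
    unfolding normM_sq_def Dh_eq_hfun[OF less_imp_neq[OF pos(1), symmetric]]
    using y_step z_step coupling by argo
qed

theorem mainTheorem11:
  fixes F :: "real^'d^'n \<Rightarrow> real"
    and gradF :: "real^'d^'n \<Rightarrow> real^'d^'n"
    and W :: "real^'d^'n \<Rightarrow> real^'d^'n"
    and \<mu> L \<eta> \<theta> lam \<alpha> \<beta> \<gamma> \<nu> \<tau> \<sigma> :: real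
    and x y z xf yf zf xg yg zg :: "nat \<Rightarrow> real^'d^'n"
    and xstar ystar zstar :: "real^'d^'n"
  assumes grad: "\<And>u. (F has_derivative (\<lambda>h. inner (gradF u) h)) (at u)"
    and sc: "mu_strongly_convex \<mu> F"
    and sm: "L_smooth L gradF"
    and muL: "0 < \<mu>" "\<mu> \<le> L"
    and Wlin: "linear W"
    and Wsym: "\<And>u v. inner (W u) v = inner u (W v)"
    and Wpsd: "\<And>u. 0 \<le> inner (W u) u"
    and Wker: "{u. W u = 0} = consensus_space"
    and xs_in: "xstar \<in> consensus_space"
    and xs_min: "\<And>u. u \<in> consensus_space \<Longrightarrow> F xstar \<le> F u"
    and ys: "ystar = gradF xstar - (\<mu> / 2) *\<^sub>R xstar"
    and zs: "zstar = - gradF xstar"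
    and pos: "0 < \<eta>" "0 < \<theta>" "0 < lam" "0 < \<alpha>" "0 < \<beta>" "0 < \<gamma>" "0 < \<nu>"
    and tau: "0 < \<tau>" "\<tau> < 1"
    and sigma: "0 < \<sigma>" "\<sigma> < 1"
    and z0: "z 0 \<in> range W"
    and init: "xf 0 = x 0" "yf 0 = y 0" "zf 0 = z 0"
    and xg_def: "\<And>k. xg k = \<tau> *\<^sub>R x k + (1 - \<tau>) *\<^sub>R xf k"
    and yg_def: "\<And>k. yg k = \<sigma> *\<^sub>R y k + (1 - \<sigma>) *\<^sub>R yf k"
    and zg_def: "\<And>k. zg k = \<sigma> *\<^sub>R z k + (1 - \<sigma>) *\<^sub>R zf k"
    and x_upd: "\<And>k. x (Suc k) = x k + (\<eta> * \<alpha>) *\<^sub>R (xg k - x (Suc k))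
                   - \<eta> *\<^sub>R (gradF (xg k) - (\<mu> / 2) *\<^sub>R xg k) + \<eta> *\<^sub>R y (Suc k)"
    and y_upd: "\<And>k. y (Suc k) = y k + (\<theta> * \<beta>) *\<^sub>R (yg k - y (Suc k))
                   - \<theta> *\<^sub>R grad_y_h \<mu> \<nu> (yg k) (zg k) + (\<theta> * \<nu>) *\<^sub>R y (Suc k) - \<theta> *\<^sub>R x (Suc k)"
    and z_upd: "\<And>k. z (Suc k) = z k + (lam * \<gamma>) *\<^sub>R (zg k - z (Suc k))
                   - lam *\<^sub>R W (grad_z_h \<mu> \<nu> (yg k) (zg k))"
    and xf_upd: "\<And>k. xf (Suc k) = xg k + (2 * \<tau> / (2 - \<tau>)) *\<^sub>R (x (Suc k) - x k)"
    and yf_upd: "\<And>k. yf (Suc k) = yg k + \<sigma> *\<^sub>R (y (Suc k) - y k)"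
    and zf_upd: "\<And>k. zf (Suc k) = zg k + \<sigma> *\<^sub>R (z (Suc k) - z k)"
    and th_bd: "\<theta> \<le> 1 / (\<sigma> * (4 / \<mu> + \<nu>))"
    and la_bd: "lam \<le> 1 / (4 * \<sigma> * lambda_max W / \<mu>)"
    and be_bd: "\<beta> \<le> min (1 / \<mu>) (\<nu> / 3)"
    and ga_bd: "\<gamma> \<le> lambda_min_pos W * \<beta>"
  shows "normM_sq W \<theta> lam (y (Suc k) - ystar) (z (Suc k) - zstar)
     \<le> normM_sq W \<theta> lam (y k - ystar) (z k - zstar)
        - (\<beta> - 2 * \<nu>) * (norm (y (Suc k) - ystar))\<^sup>2
        - \<gamma> * normWdag_sq W (z (Suc k) - zstar)
        + 2 * (1 - \<sigma>) / \<sigma> * Dh \<mu> \<nu> (yf k) (zf k) ystar zstar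
        - 2 / \<sigma> * Dh \<mu> \<nu> (yf (Suc k)) (zf (Suc k)) ystar zstar
        - 2 * inner (x (Suc k) - xstar) (y (Suc k) - ystar)"
proof -
  have R: "subspace (range W)" by (rule subspace_range_linear[OF Wlin])
  have "W xstar = 0" using Wker xs_in by blast
  have "gradF xstar \<in> range W"
  proof (rule orthogonal_kernel_imp_range[OF Wlin Wsym])
    fix u assume "W u = 0"
    hence "u \<in> consensus_space" using Wker by blast
    with grad subspace_consensus_space xs_in xs_min
    show "inner (gradF xstar) u = 0" by (rule gradient_orthogonal_at_subspace_min)
  qed
  hence "zstar \<in> range W" unfolding zs by (rule subspace_neg[OF R])
  have "z j \<in> range W \<and> zf j \<in> range W" for j
    by (rule iterates_in_range[OF Wlin _ z0 init(3) zg_def z_upd zf_upd]) (use pos in simp)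
  moreover have "ystar + zstar = - (\<mu> / 2) *\<^sub>R xstar" using ys zs by simp
  ultimately show ?thesis
    using one_step_inequality[OF Wlin Wsym Wpsd _ _ _ \<open>zstar \<in> range W\<close> \<open>W xstar = 0\<close> _
        muL(1) pos(2,3,5,6,7) sigma yg_def zg_def y_upd z_upd yf_upd zf_upd th_bd la_bd be_bd ga_bd]
    by blast
qed

end
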